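(* Let $\Bbbk$ be a field, $S$ a finite set, $U_S$ the $\Bbbk$-vector space with basis $\{e_a : a\in S\}$, $\phi\colon U_S\to W$ a $\Bbbk$-linear map, $\mathbf M=\mathbf M(\phi)$ the matroid on $S$ represented by $\phi$, and $\omega$ a total ordering of $S$. Then \[ \dim_\Bbbk H_i(V(\phi,\omega)_\bullet)=\begin{cases}\beta(\mathbf M) & \text{if } i=|S|-r(\mathbf M),\\ 0 & \text{otherwise.}\end{cases} \]
   Context: For $B\subseteq S$ let $V_B=\phi(\operatorname{span}\{e_a:a\in B\})\subseteq W$. The matroid $\mathbf M(\phi)$ has as independent sets those $I\subseteq S$ with $\dim V_I=|I|$; its rank function is $r(J)=\dim V_J$, and $r(\mathbf M)=r(S)$. The $\beta$-invariant is $\beta(\mathbf M)=(-1)^{r(S)}\sum_{J\subseteq S}(-1)^{|J|}r(J)$. Subsets of $S$ are identified with increasing sequences with respect to $\omega$. The complex $V(\phi,\omega)_\bullet$ has $V(\phi,\omega)_i=\bigoplus_{B\subseteq S,\ |B|=|S|-i,\ B\neq\emptyset} V_B$ (from $i=|S|-1$ down to $i=0$, where it is $V_S$), and its differential has, for $c\notin B$, component $V_B\to V_{B\cup\{c\}}$ equal to the inclusion multiplied by the sign of the permutation that sorts the sequence $(c,B)$ into increasing order (all other components zero). *)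

theory Defs
  imports Complex_Main "HOL-Library.Function_Algebras"
begin

text \<open>Setting: a field 'k, a k-vector space 'w given by a scalar multiplication
  sc :: 'k => 'w => 'w (with vector_space sc), a finite ground set S :: 'a set,
  U_S realised as the functions 'a => 'k vanishing outside S, with basis e_a.\<close>

definition scU :: "'k::field \<Rightarrow> ('a \<Rightarrow> 'k) \<Rightarrow> ('a \<Rightarrow> 'k)" where
  "scU c u = (\<lambda>a. c * u a)"

definition eU :: "'a \<Rightarrow> ('a \<Rightarrow> 'k::field)" where
  "eU a = (\<lambda>x. if x = a then 1 else 0)"

definition U_S :: "'a set \<Rightarrow> ('a \<Rightarrow> 'k::field) set" where
  "U_S S = {u. \<forall>a. a \<notin> S \<longrightarrow> u a = 0}"

definition linear_on_US ::
  "('k::field \<Rightarrow> 'w::ab_group_add \<Rightarrow> 'w) \<Rightarrow> 'a set \<Rightarrow> (('a \<Rightarrow> 'k) \<Rightarrow> 'w) \<Rightarrow> bool" where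
  "linear_on_US sc S phi \<longleftrightarrow>
     (\<forall>u\<in>U_S S. \<forall>v\<in>U_S S. phi (u + v) = phi u + phi v) \<and>
     (\<forall>c. \<forall>u\<in>U_S S. phi (scU c u) = sc c (phi u))"

definition VB ::
  "('k::field \<Rightarrow> 'w::ab_group_add \<Rightarrow> 'w) \<Rightarrow> (('a \<Rightarrow> 'k) \<Rightarrow> 'w) \<Rightarrow> 'a set \<Rightarrow> 'w set" where
  "VB sc phi B = phi ` module.span scU (eU ` B)"

definition mrank ::
  "('k::field \<Rightarrow> 'w::ab_group_add \<Rightarrow> 'w) \<Rightarrow> (('a \<Rightarrow> 'k) \<Rightarrow> 'w) \<Rightarrow> 'a set \<Rightarrow> nat" where
  "mrank sc phi J = vector_space.dim sc (VB sc phi J)"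

definition mindep ::
  "('k::field \<Rightarrow> 'w::ab_group_add \<Rightarrow> 'w) \<Rightarrow> (('a \<Rightarrow> 'k) \<Rightarrow> 'w) \<Rightarrow> 'a set \<Rightarrow> 'a set \<Rightarrow> bool" where
  "mindep sc phi S I \<longleftrightarrow> I \<subseteq> S \<and> mrank sc phi I = card I"

definition beta_inv ::
  "('k::field \<Rightarrow> 'w::ab_group_add \<Rightarrow> 'w) \<Rightarrow> (('a \<Rightarrow> 'k) \<Rightarrow> 'w) \<Rightarrow> 'a set \<Rightarrow> int" where
  "beta_inv sc phi S =
     (-1) ^ mrank sc phi S * (\<Sum>J\<in>Pow S. (-1) ^ card J * int (mrank sc phi J))"

text \<open>Chain groups: elements of V(phi,omega)_i = direct sum over B subset S, B nonempty,
  |B| = |S| - i of V_B, realised as functions x :: 'a set => 'w supported on those B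
  with x B in V_B.  The index i ranges over the integers (the groups are 0 outside
  0 .. |S|-1).\<close>
definition chainV ::
  "('k::field \<Rightarrow> 'w::ab_group_add \<Rightarrow> 'w) \<Rightarrow> (('a \<Rightarrow> 'k) \<Rightarrow> 'w) \<Rightarrow> 'a set \<Rightarrow> int \<Rightarrow> ('a set \<Rightarrow> 'w) set" where
  "chainV sc phi S i =
     {x. (\<forall>B. x B \<in> VB sc phi B) \<and>
         (\<forall>B. x B \<noteq> 0 \<longrightarrow> B \<subseteq> S \<and> B \<noteq> {} \<and> int (card B) = int (card S) - i)}"

definition scC :: "('k \<Rightarrow> 'w \<Rightarrow> 'w) \<Rightarrow> 'k \<Rightarrow> ('a set \<Rightarrow> 'w) \<Rightarrow> ('a set \<Rightarrow> 'w)" where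
  "scC sc c x = (\<lambda>B. sc c (x B))"

text \<open>Sign of the permutation sorting (c, B) into increasing order w.r.t. omega:
  (-1)^(number of elements of B that are omega-smaller than c).\<close>
definition sortsign :: "'a rel \<Rightarrow> 'a \<Rightarrow> 'a set \<Rightarrow> 'k::field" where
  "sortsign om c B = (-1) ^ card {b\<in>B. (b, c) \<in> om \<and> b \<noteq> c}"

text \<open>Differential: component V_B -> V_(B u {c}) (c notin B) is the inclusion times
  the sign; so (d x)(C) = sum_{c in C} sign(c, C - {c}) x(C - {c}).\<close>
definition diffV ::
  "('k::field \<Rightarrow> 'w::ab_group_add \<Rightarrow> 'w) \<Rightarrow> 'a rel \<Rightarrow> 'a set \<Rightarrow> ('a set \<Rightarrow> 'w) \<Rightarrow> ('a set \<Rightarrow> 'w)" where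
  "diffV sc om S x =
     (\<lambda>C. if C \<subseteq> S then (\<Sum>c\<in>C. sc (sortsign om c (C - {c})) (x (C - {c}))) else 0)"

definition homdim ::
  "('k::field \<Rightarrow> 'w::ab_group_add \<Rightarrow> 'w) \<Rightarrow> (('a \<Rightarrow> 'k) \<Rightarrow> 'w) \<Rightarrow> 'a rel \<Rightarrow> 'a set \<Rightarrow> int \<Rightarrow> int" where
  "homdim sc phi om S i =
     int (vector_space.dim (scC sc) {x\<in>chainV sc phi S i. diffV sc om S x = 0})
     - int (vector_space.dim (scC sc) (diffV sc om S ` chainV sc phi S (i + 1)))"

end

theory Submission
  imports Defs
begin

text \<open>For sets \<open>A\<close> and \<open>T\<close> of ground elements consider the complex of \<open>T\<close> with
  coefficients taken modulo \<open>span (v ` A)\<close>, that is, with \<open>A\<close> contracted. It is exact away from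
  its rank degree, by induction on \<open>|T|\<close> removing the \<open>\<omega>\<close>-largest element \<open>a\<close>. If \<open>v a\<close>
  lies in \<open>span (v ` A)\<close>, coning with \<open>a\<close> is a contracting homotopy. If \<open>a\<close> is a coloop, a
  cycle splits into a part coned off by \<open>a\<close> and a part on the line through \<open>v a\<close> coned off by
  any other element. Otherwise a cycle is first reduced by exactness of the deletion
  \<open>T - {a}\<close>, then by exactness of the contraction (\<open>T - {a}\<close> modulo \<open>span (v ` insert a A)\<close>),
  and the remainder is coned off. With homology concentrated in a single degree, rank-nullity
  turns its dimension into the Euler characteristic \<open>(-1)^r \<Sum>\<^sub>J (-1)^|J| r(J) = \<beta>(M)\<close>.\<close>

section \<open>Linear algebra without a global basis\<close>

text \<open>The library proves these facts in \<open>finite_dimensional_vector_space\<close>, which needs a finite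
  basis of the whole type; here only finitely spanned subspaces are finite-dimensional.\<close>

context vector_space
begin

lemma dim_insert_finite_span:
  assumes "finite G" "S \<subseteq> span G"
  shows "dim (insert x S) = (if x \<in> span S then dim S else dim S + 1)"
proof (cases "x \<in> span S")
  case True
  then show ?thesis
    by (metis dim_span span_redundant)
next
  case False
  obtain B where B: "B \<subseteq> span S" "independent B" "span S \<subseteq> span B" "card B = dim (span S)"
    using basis_exists [of "span S"] by blast
  have "finite B"
    using independent_span_bound[OF assms(1) B(2)] B(1) assms(2)
    by (meson order_trans span_minimal subspace_span)
  have "dim (span (insert x S)) = Suc (dim S)"
  proof (rule dim_unique)
    show "insert x B \<subseteq> span (insert x S)"
      by (meson B(1) insertI1 insert_subset order_trans span_base span_mono subset_insertI)
    show "span (insert x S) \<subseteq> span (insert x B)"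
      by (metis B(1,3) span_breakdown_eq span_subspace subsetI subspace_span)
    show "independent (insert x B)"
      by (metis B(1-3) independent_insert span_subspace subspace_span False)
    show "card (insert x B) = Suc (dim S)"
      using B False \<open>finite B\<close> by force
  qed
  then show ?thesis
    by (metis False Suc_eq_plus1 dim_span)
qed

lemma dim_span_insert_finite:
  assumes "finite F" "x \<notin> span F"
  shows "dim (span (insert x F)) = dim (span F) + 1"
  using dim_insert_finite_span[OF assms(1) span_superset, of x] assms(2) by simp

lemma dim_mono_finite:
  assumes "V \<subseteq> span W" "finite W"
  shows "dim V \<le> dim W"
proof -
  obtain B where B: "B \<subseteq> W" "independent B" "W \<subseteq> span B" "card B = dim W"
    using basis_exists[of W] by blast
  have "V \<subseteq> span B"
    using assms(1) span_minimal[OF B(3) subspace_span] by blast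
  moreover have "finite B"
    using B(1) assms(2) finite_subset by blast
  ultimately have "dim V \<le> card B"
    by (rule dim_le_card)
  then show ?thesis
    using B(4) by simp
qed

lemma dim_empty_set [simp]: "dim {} = 0"
  using dim_eq_card[of "{}" "{}"] independent_empty by simp

lemma dim_zero_singleton [simp]: "dim {0} = 0"
  using dim_eq_card[of "{}" "{0}"] independent_empty by simp

lemma subspace_finite_span_obtain_basis:
  assumes "subspace V" "V \<subseteq> span G" "finite G"
  obtains B where "finite B" "V = span B"
proof -
  obtain B where B: "B \<subseteq> V" "independent B" "V \<subseteq> span B" "card B = dim V"
    using basis_exists[of V] by blast
  have "finite B"
    using independent_span_bound[OF assms(3) B(2)] B(1) assms(2) by blast
  moreover have "V = span B"
    using B assms(1) by (metis span_subspace)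
  ultimately show ?thesis using that by blast
qed

lemma span_insert_diff:
  assumes "y \<in> span F"
  shows "span (insert (z - y) F) = span (insert z F)"
proof -
  have F1: "F \<subseteq> span (insert z F)" and F2: "F \<subseteq> span (insert (z - y) F)"
    by (auto intro: span_base)
  have y1: "y \<in> span (insert z F)" and y2: "y \<in> span (insert (z - y) F)"
    using assms span_mono[of F] by (auto simp: subset_insertI)
  have "z - y \<in> span (insert z F)"
    using span_diff[OF span_base y1] by simp
  moreover have "z \<in> span (insert (z - y) F)"
    using span_add[OF span_base y2, of "z - y"] by simp
  ultimately show ?thesis
    using F1 F2 unfolding span_eq by blast
qed

lemma span_singleton_inter_eq_zero:
  assumes "w \<notin> span M" "u \<in> span {w}" "u \<in> span M"
  shows "u = 0"
proof -
  obtain s where s: "u = scale s w"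
    using assms(2) by (auto simp: span_singleton)
  have "s = 0"
  proof (rule ccontr)
    assume "s \<noteq> 0"
    then have "w = scale (inverse s) u"
      using s by simp
    then show False
      using assms(1,3) span_scale by metis
  qed
  then show ?thesis
    using s by simp
qed

end

context Vector_Spaces.linear
begin

lemma image_span_insert_kernel:
  assumes "f w = 0"
  shows "f ` vs1.span (insert w F) = f ` vs1.span F"
  unfolding span_image[symmetric] using assms by simp

lemma kernel_span_insert_kernel:
  assumes "f w = 0"
  shows "{x \<in> vs1.span (insert w F). f x = 0} = vs1.span (insert w {x \<in> vs1.span F. f x = 0})"
proof
  show "{x \<in> vs1.span (insert w F). f x = 0} \<subseteq> vs1.span (insert w {x \<in> vs1.span F. f x = 0})"
  proof
    fix x
    assume x: "x \<in> {x \<in> vs1.span (insert w F). f x = 0}"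
    then obtain k where k: "x - k *a w \<in> vs1.span F"
      unfolding vs1.span_breakdown_eq by blast
    have "x - k *a w \<in> {x \<in> vs1.span F. f x = 0}"
      using k x assms by (simp add: diff scale)
    then have "x - k *a w \<in> vs1.span {x \<in> vs1.span F. f x = 0}"
      by (rule vs1.span_base)
    then show "x \<in> vs1.span (insert w {x \<in> vs1.span F. f x = 0})"
      unfolding vs1.span_breakdown_eq by blast
  qed
  have "vs1.subspace {x \<in> vs1.span (insert w F). f x = 0}"
    using vs1.subspace_inter[OF vs1.subspace_span subspace_kernel] by (simp add: Int_def)
  moreover have "insert w {x \<in> vs1.span F. f x = 0} \<subseteq> {x \<in> vs1.span (insert w F). f x = 0}"
    using assms vs1.span_base vs1.span_mono[of F "insert w F"] by auto
  ultimately show "vs1.span (insert w {x \<in> vs1.span F. f x = 0}) \<subseteq> {x \<in> vs1.span (insert w F). f x = 0}"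
    by (rule vs1.span_minimal[rotated])
qed

lemma kernel_span_insert_nonimage:
  assumes "f z \<notin> f ` vs1.span F"
  shows "{x \<in> vs1.span (insert z F). f x = 0} = {x \<in> vs1.span F. f x = 0}"
proof (intro set_eqI iffI)
  fix x
  assume "x \<in> {x \<in> vs1.span (insert z F). f x = 0}"
  then obtain k where k: "x - k *a z \<in> vs1.span F" and fx: "f x = 0"
    unfolding vs1.span_breakdown_eq by blast
  have "k = 0"
  proof (rule ccontr)
    assume "k \<noteq> 0"
    have "f ((- inverse k) *a (x - k *a z)) = (- inverse k) *b (f x - k *b f z)"
      by (simp only: scale diff)
    also have "\<dots> = f z"
      using fx \<open>k \<noteq> 0\<close> by simp
    finally have "f ((- inverse k) *a (x - k *a z)) = f z" .
    moreover have "(- inverse k) *a (x - k *a z) \<in> vs1.span F"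
      using k vs1.span_scale by blast
    ultimately show False
      using assms by (metis image_eqI)
  qed
  then show "x \<in> {x \<in> vs1.span F. f x = 0}"
    using k fx by simp
next
  fix x
  assume "x \<in> {x \<in> vs1.span F. f x = 0}"
  then show "x \<in> {x \<in> vs1.span (insert z F). f x = 0}"
    using vs1.span_mono[of F "insert z F"] by blast
qed

lemma dim_kernel_span_insert_kernel:
  assumes "finite F" "f w = 0" "w \<notin> vs1.span F"
  shows "vs1.dim {x \<in> vs1.span (insert w F). f x = 0} = vs1.dim {x \<in> vs1.span F. f x = 0} + 1"
proof -
  have N_span: "{x \<in> vs1.span F. f x = 0} \<subseteq> vs1.span F"
    by blast
  then have "w \<notin> vs1.span {x \<in> vs1.span F. f x = 0}"
    using assms(3) vs1.span_minimal[OF N_span vs1.subspace_span] by blast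
  then show ?thesis
    unfolding kernel_span_insert_kernel[OF assms(2)] vs1.dim_span
    using vs1.dim_insert_finite_span[OF assms(1) N_span, of w] by simp
qed

lemma dim_image_span_insert_nonimage:
  assumes "finite F" "f z \<notin> f ` vs1.span F"
  shows "vs2.dim (f ` vs1.span (insert z F)) = vs2.dim (f ` vs1.span F) + 1"
proof -
  have "f z \<notin> vs2.span (f ` F)"
    using assms(2) unfolding span_image .
  then show ?thesis
    unfolding span_image[symmetric] vs2.dim_span image_insert
    using vs2.dim_insert_finite_span[OF finite_imageI[OF assms(1)] vs2.span_superset] by simp
qed

lemma rank_nullity_span:
  assumes "finite F"
  shows "vs1.dim (vs1.span F) = vs1.dim {x \<in> vs1.span F. f x = 0} + vs2.dim (f ` vs1.span F)"
  using assms
proof (induction F rule: finite_induct)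
  case empty
  have "{x \<in> vs1.span {}. f x = 0} = {0}" "f ` vs1.span {} = {0}"
    by auto
  then show ?case
    by simp
next
  case (insert z F)
  show ?case
  proof (cases "f z \<in> f ` vs1.span F")
    case True
    then obtain y where y: "y \<in> vs1.span F" "f y = f z"
      by auto
    define w where "w = z - y"
    have fw: "f w = 0"
      using y by (simp add: w_def diff)
    have span_eq: "vs1.span (insert z F) = vs1.span (insert w F)"
      unfolding w_def using vs1.span_insert_diff[OF y(1)] by simp
    show ?thesis
    proof (cases "w \<in> vs1.span F")
      case True
      then show ?thesis
        using span_eq insert.IH by (simp add: vs1.span_redundant)
    next
      case False
      then show ?thesis
        using span_eq insert.IH image_span_insert_kernel[OF fw, of F]
          dim_kernel_span_insert_kernel[OF insert.hyps(1) fw False]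
          vs1.dim_span_insert_finite[OF insert.hyps(1) False] by simp
    qed
  next
    case False
    then have "z \<notin> vs1.span F"
      by blast
    then show ?thesis
      using insert.IH kernel_span_insert_nonimage[OF False]
        dim_image_span_insert_nonimage[OF insert.hyps(1) False]
        vs1.dim_span_insert_finite[OF insert.hyps(1)] by simp
  qed
qed

lemma rank_nullity_finite_span:
  assumes "vs1.subspace V" "V \<subseteq> vs1.span G" "finite G"
  shows "vs1.dim V = vs1.dim {x \<in> V. f x = 0} + vs2.dim (f ` V)"
proof -
  obtain B where "finite B" "V = vs1.span B"
    using vs1.subspace_finite_span_obtain_basis[OF assms] .
  then show ?thesis
    using rank_nullity_span by simp
qed

end

lemma sum_offdiagonal_antisymmetric:
  fixes F :: "'a \<Rightarrow> 'a \<Rightarrow> 'b::ab_group_add"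
  assumes "finite C" "\<And>c c'. c \<in> C \<Longrightarrow> c' \<in> C \<Longrightarrow> c \<noteq> c' \<Longrightarrow> F c c' + F c' c = 0"
  shows "(\<Sum>c\<in>C. \<Sum>c'\<in>C - {c}. F c c') = 0"
  using assms
proof (induction C rule: finite_induct)
  case empty
  then show ?case
    by simp
next
  case (insert z C)
  have split: "(\<Sum>c'\<in>insert z C - {c}. F c c') = F c z + (\<Sum>c'\<in>C - {c}. F c c')" if "c \<in> C" for c
  proof -
    have "insert z C - {c} = insert z (C - {c})"
      using that insert.hyps by auto
    then show ?thesis
      using insert.hyps by simp
  qed
  have "(\<Sum>c\<in>insert z C. \<Sum>c'\<in>insert z C - {c}. F c c')
      = (\<Sum>c'\<in>C. F z c') + (\<Sum>c\<in>C. \<Sum>c'\<in>insert z C - {c}. F c c')"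
    using insert.hyps by (simp add: insert_absorb)
  also have "(\<Sum>c\<in>C. \<Sum>c'\<in>insert z C - {c}. F c c') = (\<Sum>c\<in>C. F c z) + (\<Sum>c\<in>C. \<Sum>c'\<in>C - {c}. F c c')"
    using split by (simp add: sum.distrib)
  also have "(\<Sum>c\<in>C. \<Sum>c'\<in>C - {c}. F c c') = 0"
    using insert.IH insert.prems by blast
  also have "(\<Sum>c\<in>C. F z c) + ((\<Sum>c\<in>C. F c z) + 0) = (\<Sum>c\<in>C. F z c + F c z)"
    by (simp add: sum.distrib)
  also have "\<dots> = 0"
    using insert.prems insert.hyps by (intro sum.neutral) auto
  finally show ?case .
qed

lemma sum_alternating_telescope:
  fixes b :: "nat \<Rightarrow> int"
  shows "(\<Sum>j<m. (-1) ^ j * (b j + b (Suc j))) = b 0 - (-1) ^ m * b m"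
  by (induction m) (auto simp: algebra_simps)

section \<open>Direct sums indexed by sets\<close>

locale chain_vector_space = vector_space sc
  for sc :: "'k::field \<Rightarrow> 'w::ab_group_add \<Rightarrow> 'w"
begin

sublocale C: vector_space "scC sc"
  unfolding vector_space_def scC_def
  by (auto simp: fun_eq_iff scale_right_distrib scale_left_distrib)

lemma linear_fun_upd_zero: "Vector_Spaces.linear (scC sc) (scC sc) (\<lambda>x. x(B := 0))"
  unfolding Vector_Spaces.linear_iff
  by (auto simp: C.vector_space_axioms fun_eq_iff scC_def)

lemma linear_zero_upd: "Vector_Spaces.linear sc (scC sc) (\<lambda>w. 0(B := w))"
  unfolding Vector_Spaces.linear_iff
  by (auto simp: C.vector_space_axioms vector_space_axioms fun_eq_iff scC_def)

definition direct_sum :: "('a set \<Rightarrow> 'w set) \<Rightarrow> 'a set set \<Rightarrow> ('a set \<Rightarrow> 'w) set" where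
  "direct_sum W F = {x. (\<forall>B. x B \<in> W B) \<and> (\<forall>B. x B \<noteq> 0 \<longrightarrow> B \<in> F)}"

lemma direct_sum_subspace:
  assumes "\<And>B. subspace (W B)"
  shows "C.subspace (direct_sum W F)"
  unfolding C.subspace_def
proof (intro conjI ballI allI)
  show "0 \<in> direct_sum W F"
    using assms subspace_0 by (simp add: direct_sum_def)
next
  fix x y
  assume "x \<in> direct_sum W F" "y \<in> direct_sum W F"
  then have x: "\<forall>B. x B \<in> W B" "\<forall>B. x B \<noteq> 0 \<longrightarrow> B \<in> F"
    and y: "\<forall>B. y B \<in> W B" "\<forall>B. y B \<noteq> 0 \<longrightarrow> B \<in> F"
    by (auto simp: direct_sum_def)
  have "x B + y B \<in> W B" for B
    using x y assms subspace_add by blast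
  moreover have "x B + y B \<noteq> 0 \<Longrightarrow> B \<in> F" for B
    using x y by (metis add.right_neutral)
  ultimately show "x + y \<in> direct_sum W F"
    by (simp add: direct_sum_def)
next
  fix c x
  assume "x \<in> direct_sum W F"
  then show "scC sc c x \<in> direct_sum W F"
    using assms subspace_scale by (auto simp: scC_def direct_sum_def)
qed

lemma direct_sum_insert_decompose:
  assumes "x \<in> direct_sum W (insert B F)" "0 \<in> W B"
  shows "x(B := 0) \<in> direct_sum W F" "x = x(B := 0) + 0(B := x B)"
  using assms by (auto simp: direct_sum_def fun_eq_iff)

lemma direct_sum_finite_span:
  assumes "finite F" "\<And>B. B \<in> F \<Longrightarrow> W B \<subseteq> span (G B)" "\<And>B. B \<in> F \<Longrightarrow> finite (G B)"
    and "\<And>B. 0 \<in> W B"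
  shows "\<exists>X. finite X \<and> direct_sum W F \<subseteq> C.span X"
  using assms(1-3)
proof (induction F rule: finite_induct)
  case empty
  have "direct_sum W {} = {0}"
    using assms(4) by (auto simp: direct_sum_def fun_eq_iff)
  then show ?case
    using C.span_zero by (intro exI[of _ "{}"]) simp
next
  case (insert B F)
  have "\<exists>X. finite X \<and> direct_sum W F \<subseteq> C.span X"
    by (rule insert.IH) (simp_all add: insert.prems)
  then obtain X where X: "finite X" "direct_sum W F \<subseteq> C.span X"
    by blast
  define Y where "Y = (\<lambda>w. 0(B := w)) ` G B"
  have "direct_sum W (insert B F) \<subseteq> C.span (X \<union> Y)"
  proof
    fix x
    assume x: "x \<in> direct_sum W (insert B F)"
    have "x(B := 0) \<in> C.span X"
      using direct_sum_insert_decompose(1)[OF x assms(4)] X(2) by blast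
    then have "x(B := 0) \<in> C.span (X \<union> Y)"
      using C.span_mono[of X "X \<union> Y"] by blast
    moreover have "x B \<in> span (G B)"
      using x insert.prems(1)[of B] by (simp add: direct_sum_def subset_iff)
    then have "0(B := x B) \<in> C.span Y"
      unfolding Y_def module_hom.span_image[OF linear_zero_upd[unfolded linear_iff_module_hom]]
      by (rule imageI)
    then have "0(B := x B) \<in> C.span (X \<union> Y)"
      using C.span_mono[of Y "X \<union> Y"] by blast
    ultimately have "x(B := 0) + 0(B := x B) \<in> C.span (X \<union> Y)"
      by (rule C.span_add)
    then show "x \<in> C.span (X \<union> Y)"
      using direct_sum_insert_decompose(2)[OF x assms(4)] by simp
  qed
  moreover have "finite (X \<union> Y)"
    using X(1) insert.prems(2) by (simp add: Y_def)
  ultimately show ?case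
    by blast
qed

lemma direct_sum_insert_kernel:
  assumes "\<And>B'. 0 \<in> W B'"
  shows "{x \<in> direct_sum W (insert B F). x(B := 0) = 0} = (\<lambda>w. 0(B := w)) ` W B"
proof (intro set_eqI iffI)
  fix x
  assume x: "x \<in> {x \<in> direct_sum W (insert B F). x(B := 0) = 0}"
  then have "x = 0(B := x B)"
    using direct_sum_insert_decompose(2)[of x W B F] assms by simp
  moreover have "x B \<in> W B"
    using x by (simp add: direct_sum_def)
  ultimately show "x \<in> (\<lambda>w. 0(B := w)) ` W B"
    by (metis image_eqI)
next
  fix x
  assume "x \<in> (\<lambda>w. 0(B := w)) ` W B"
  then show "x \<in> {x \<in> direct_sum W (insert B F). x(B := 0) = 0}"
    using assms by (auto simp: direct_sum_def split: if_splits)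
qed

lemma direct_sum_insert_image:
  assumes "B \<notin> F" "0 \<in> W B"
  shows "(\<lambda>x. x(B := 0)) ` direct_sum W (insert B F) = direct_sum W F"
proof
  show "(\<lambda>x. x(B := 0)) ` direct_sum W (insert B F) \<subseteq> direct_sum W F"
    using direct_sum_insert_decompose(1) assms(2) by blast
  show "direct_sum W F \<subseteq> (\<lambda>x. x(B := 0)) ` direct_sum W (insert B F)"
  proof
    fix x
    assume x: "x \<in> direct_sum W F"
    then have "x = x(B := 0)" "x \<in> direct_sum W (insert B F)"
      using assms(1) by (auto simp: direct_sum_def fun_eq_iff)
    then show "x \<in> (\<lambda>x. x(B := 0)) ` direct_sum W (insert B F)"
      by (metis image_eqI)
  qed
qed

lemma dim_zero_upd_image:
  assumes "finite G"
  shows "C.dim ((\<lambda>w. 0(B := w)) ` span G) = dim (span G)"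
proof -
  have "{w \<in> span G. 0(B := w) = (0 :: 'a set \<Rightarrow> 'w)} = {0}"
    using span_zero by (auto simp: fun_eq_iff)
  moreover have "dim (span G) = dim {w \<in> span G. 0(B := w) = (0 :: 'a set \<Rightarrow> 'w)}
      + C.dim ((\<lambda>w. 0(B := w)) ` span G)"
    by (rule linear.rank_nullity_finite_span[OF linear_zero_upd subspace_span order_refl assms])
  ultimately show ?thesis
    by simp
qed

lemma dim_direct_sum:
  assumes "finite F" "\<And>B. W B = span (G B)" "\<And>B. B \<in> F \<Longrightarrow> finite (G B)"
  shows "C.dim (direct_sum W F) = (\<Sum>B\<in>F. dim (W B))"
  using assms(1,3)
proof (induction F rule: finite_induct)
  case empty
  have "direct_sum W {} = {0}"
    using assms(2) span_zero by (auto simp: direct_sum_def fun_eq_iff)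
  then show ?case
    by simp
next
  case (insert B F)
  have W0: "0 \<in> W B'" for B'
    using assms(2) span_zero by simp
  have "C.subspace (direct_sum W (insert B F))"
    by (rule direct_sum_subspace) (simp add: assms(2))
  moreover obtain X where "finite X" "direct_sum W (insert B F) \<subseteq> C.span X"
    using direct_sum_finite_span[of "insert B F" W G] insert assms(2) W0 by auto
  ultimately have "C.dim (direct_sum W (insert B F)) =
      C.dim {x \<in> direct_sum W (insert B F). x(B := 0) = 0}
      + C.dim ((\<lambda>x. x(B := 0)) ` direct_sum W (insert B F))"
    using linear.rank_nullity_finite_span[OF linear_fun_upd_zero] by blast
  then show ?case
    using insert direct_sum_insert_kernel[of W, OF W0] direct_sum_insert_image[OF insert.hyps(2) W0]
      dim_zero_upd_image[of "G B" B, folded assms(2)] by simp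
qed

end

section \<open>The complex of an ordered configuration\<close>

locale ordered_configuration = chain_vector_space sc
  for sc :: "'k::field \<Rightarrow> 'w::ab_group_add \<Rightarrow> 'w" +
  fixes om :: "'a rel" and S0 :: "'a set" and v :: "'a \<Rightarrow> 'w"
  assumes linear_order: "linear_order_on S0 om" and finite_ground: "finite S0"
begin

definition prec :: "'a \<Rightarrow> 'a \<Rightarrow> bool" where
  "prec b c \<longleftrightarrow> (b, c) \<in> om \<and> b \<noteq> c"

abbreviation sg :: "'a \<Rightarrow> 'a set \<Rightarrow> 'k" where
  "sg c B \<equiv> sortsign om c B"

abbreviation d :: "'a set \<Rightarrow> ('a set \<Rightarrow> 'w) \<Rightarrow> ('a set \<Rightarrow> 'w)" where
  "d T x \<equiv> diffV sc om T x"

lemma prec_asym: "prec b c \<Longrightarrow> \<not> prec c b"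
  using linear_order unfolding linear_order_on_def partial_order_on_def antisym_def prec_def
  by blast

lemma prec_trans: "prec a b \<Longrightarrow> prec b c \<Longrightarrow> prec a c"
  using linear_order prec_asym
  unfolding linear_order_on_def partial_order_on_def preorder_on_def trans_def prec_def
  by blast

lemma prec_iff_not_prec: "b \<in> S0 \<Longrightarrow> c \<in> S0 \<Longrightarrow> b \<noteq> c \<Longrightarrow> prec b c \<longleftrightarrow> \<not> prec c b"
  using linear_order prec_asym unfolding linear_order_on_def total_on_def prec_def by blast

lemma ex_maximal:
  assumes "finite T" "T \<noteq> {}"
  shows "\<exists>a\<in>T. \<forall>c\<in>T. \<not> prec a c"
  using assms
proof (induction T rule: finite_ne_induct)
  case (singleton x)
  then show ?case
    by (simp add: prec_def)
next
  case (insert x F)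
  obtain a where a: "a \<in> F" "\<forall>c\<in>F. \<not> prec a c"
    using insert.IH by blast
  show ?case
  proof (cases "prec a x")
    case True
    then have "\<forall>c\<in>insert x F. \<not> prec x c"
      using a prec_trans prec_asym prec_def by blast
    then show ?thesis
      by blast
  next
    case False
    then show ?thesis
      using a by blast
  qed
qed

lemma sortsign_insert:
  assumes "finite D" "c' \<notin> D" "c' \<noteq> c"
  shows "sg c (insert c' D) = (if prec c' c then - sg c D else sg c D)"
proof -
  have "finite {b \<in> D. (b, c) \<in> om \<and> b \<noteq> c}"
    using assms(1) by simp
  moreover have "{b \<in> insert c' D. (b, c) \<in> om \<and> b \<noteq> c}
      = (if prec c' c then insert c' {b \<in> D. (b, c) \<in> om \<and> b \<noteq> c} else {b \<in> D. (b, c) \<in> om \<and> b \<noteq> c})"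
    unfolding prec_def by auto
  ultimately show ?thesis
    using assms(2) by (simp add: sortsign_def)
qed

lemma sortsign_square: "sg c D * sg c D = 1"
  unfolding sortsign_def by (simp flip: power_mult_distrib)

lemma diffV_subset: "C \<subseteq> T \<Longrightarrow> d T x C = (\<Sum>c\<in>C. sc (sg c (C - {c})) (x (C - {c})))"
  by (simp add: diffV_def)

lemma diffV_not_subset: "\<not> C \<subseteq> T \<Longrightarrow> d T x C = 0"
  by (simp add: diffV_def)

lemma diffV_zero: "d T (\<lambda>B. 0) = (\<lambda>B. 0)"
  by (simp add: diffV_def fun_eq_iff)

lemma diffV_add: "d T (\<lambda>B. x B + y B) C = d T x C + d T y C"
  by (simp add: diffV_def scale_right_distrib sum.distrib)

lemma diffV_diff: "d T (\<lambda>B. x B - y B) C = d T x C - d T y C"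
  by (simp add: diffV_def scale_right_diff_distrib sum_subtractf)

lemma diffV_in_subspace:
  assumes "subspace V" "\<And>B. x B \<in> V"
  shows "d T x C \<in> V"
  unfolding diffV_def using assms
  by (auto intro!: subspace_sum subspace_scale subspace_0)

lemma linear_diffV: "Vector_Spaces.linear (scC sc) (scC sc) (d T)"
  unfolding Vector_Spaces.linear_iff
proof (intro conjI allI)
  show "vector_space (scC sc)"
    by (rule C.vector_space_axioms)
  then show "vector_space (scC sc)" .
  fix x y :: "'a set \<Rightarrow> 'w" and c
  show "d T (x + y) = d T x + d T y"
    using diffV_add[of T x y] by (simp add: fun_eq_iff plus_fun_def)
  show "d T (scC sc c x) = scC sc c (d T x)"
    by (simp add: diffV_def scC_def fun_eq_iff scale_sum_right mult.commute)
qed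

lemma diffV_diffV:
  assumes "finite T" "T \<subseteq> S0"
  shows "d T (d T x) C = 0"
proof (cases "C \<subseteq> T")
  case False
  then show ?thesis
    by (simp add: diffV_not_subset)
next
  case True
  have "finite C"
    using True assms(1) finite_subset by blast
  define F where "F c c' = sc (sg c (C - {c}) * sg c' (C - {c} - {c'})) (x (C - {c} - {c'}))" for c c'
  have "d T (d T x) C = (\<Sum>c\<in>C. \<Sum>c'\<in>C - {c}. F c c')"
  proof -
    have "C - {c} \<subseteq> T" for c
      using True by blast
    then show ?thesis
      using True by (simp add: diffV_subset scale_sum_right F_def)
  qed
  also have "\<dots> = 0"
  proof (rule sum_offdiagonal_antisymmetric[OF \<open>finite C\<close>])
    fix c c'
    assume cc: "c \<in> C" "c' \<in> C" "c \<noteq> c'"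
    define D where "D = C - {c} - {c'}"
    have D: "C - {c} = insert c' D" "C - {c'} = insert c D" "C - {c'} - {c} = D"
      "finite D" "c \<notin> D" "c' \<notin> D"
      using cc \<open>finite C\<close> unfolding D_def by auto
    have "D - {c'} = D" "D - {c} = D"
      using D(5,6) by auto
    then have "F c c' + F c' c = sc (sg c (insert c' D) * sg c' D + sg c' (insert c D) * sg c D) (x D)"
      unfolding F_def D(1,2) by (simp add: scale_left_distrib)
    also have "sg c (insert c' D) * sg c' D + sg c' (insert c D) * sg c D = 0"
      using prec_iff_not_prec[of c c'] cc True assms(2) D(4-6) by (auto simp: sortsign_insert)
    finally show "F c c' + F c' c = 0"
      by simp
  qed
  finally show ?thesis .
qed

lemma sortsign_insert_cancel:
  assumes "e \<in> S0" "c \<in> S0" "e \<noteq> c" "finite D" "e \<notin> D" "c \<notin> D"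
  shows "sg e (insert c D) * sg c (insert e D) + sg c D * sg e D = 0"
  using prec_iff_not_prec[OF assms(1-3)] assms(3-6) by (auto simp: sortsign_insert)

definition cone :: "'a \<Rightarrow> ('a set \<Rightarrow> 'w) \<Rightarrow> ('a set \<Rightarrow> 'w)" where
  "cone e x = (\<lambda>B. if e \<notin> B then sc (sg e B) (x (insert e B)) else 0)"

lemma cone_in_subspace: "subspace V \<Longrightarrow> (\<And>B. x B \<in> V) \<Longrightarrow> cone e x B \<in> V"
  by (simp add: cone_def subspace_scale subspace_0)

lemma diffV_cone_member:
  assumes "finite T" "e \<in> C" "C \<subseteq> T"
  shows "d T (cone e x) C = x C"
proof -
  have "finite C"
    using assms(1,3) finite_subset by blast
  have "d T (cone e x) C = sc (sg e (C - {e})) (cone e x (C - {e}))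
      + (\<Sum>c\<in>C - {e}. sc (sg c (C - {c})) (cone e x (C - {c})))"
    using assms(2,3) \<open>finite C\<close> by (simp add: diffV_subset sum.remove)
  also have "(\<Sum>c\<in>C - {e}. sc (sg c (C - {c})) (cone e x (C - {c}))) = 0"
    using assms(2) by (intro sum.neutral) (auto simp: cone_def)
  also have "sc (sg e (C - {e})) (cone e x (C - {e})) = x C"
    using assms(2) sortsign_square by (simp add: cone_def insert_absorb)
  finally show ?thesis
    by simp
qed

lemma diffV_cone_nonmember:
  assumes "finite T" "T \<subseteq> S0" "e \<in> T" "e \<notin> C" "C \<subseteq> T"
  shows "d T (cone e x) C + cone e (d T x) C = x C"
proof -
  have "finite C"
    using assms(1,5) finite_subset by blast
  have ins: "insert e C - {c} = insert e (C - {c})" if "c \<in> C" for c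
    using that assms(4) by auto
  have "d T x (insert e C) = sc (sg e C) (x C)
      + (\<Sum>c\<in>C. sc (sg c (insert e (C - {c}))) (x (insert e (C - {c}))))"
    using assms(3-5) \<open>finite C\<close> by (simp add: diffV_subset ins)
  then have "cone e (d T x) C = x C
      + (\<Sum>c\<in>C. sc (sg e C * sg c (insert e (C - {c}))) (x (insert e (C - {c}))))"
    using assms(4) sortsign_square by (simp add: cone_def scale_right_distrib scale_sum_right)
  moreover have "d T (cone e x) C
      = (\<Sum>c\<in>C. sc (sg c (C - {c}) * sg e (C - {c})) (x (insert e (C - {c}))))"
    using assms(4,5) by (simp add: diffV_subset cone_def)
  moreover have "sg e C * sg c (insert e (C - {c})) + sg c (C - {c}) * sg e (C - {c}) = 0"
    if "c \<in> C" for c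
    using sortsign_insert_cancel[of e c "C - {c}"] that assms(2-5) \<open>finite C\<close>
    by (auto simp: insert_absorb)
  ultimately show ?thesis
    by (simp add: scale_left_distrib[symmetric] sum.distrib[symmetric] add.commute)
qed

lemma diffV_cone_plus_cone_diffV:
  assumes "finite T" "T \<subseteq> S0" "e \<in> T" "\<And>B. x B \<noteq> 0 \<Longrightarrow> B \<subseteq> T"
  shows "d T (cone e x) C + cone e (d T x) C = x C"
proof (cases "C \<subseteq> T")
  case False
  then show ?thesis
    using assms(4) by (auto simp: diffV_not_subset cone_def)
next
  case True
  then show ?thesis
    using assms diffV_cone_member[of T e C x] diffV_cone_nonmember[of T e C x]
    by (cases "e \<in> C") (simp_all add: cone_def)
qed

section \<open>Exactness of the relative complexes\<close>

text \<open>Chains are indexed by their degree \<open>k = |B|\<close>; the homological index \<open>i\<close> of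
  \<open>homdim\<close> corresponds to \<open>k = |S0| - i\<close>.\<close>

definition coeff :: "'a set \<Rightarrow> 'a set \<Rightarrow> 'w set" where
  "coeff A B = span (v ` (A \<union> B))"

definition rel_chain :: "'a set \<Rightarrow> 'a set \<Rightarrow> int \<Rightarrow> ('a set \<Rightarrow> 'w) \<Rightarrow> bool" where
  "rel_chain A T k x \<longleftrightarrow>
     (\<forall>B. x B \<in> coeff A B) \<and> (\<forall>B. x B \<noteq> 0 \<longrightarrow> B \<subseteq> T \<and> int (card B) = k)"

definition rel_cycle :: "'a set \<Rightarrow> 'a set \<Rightarrow> int \<Rightarrow> ('a set \<Rightarrow> 'w) \<Rightarrow> bool" where
  "rel_cycle A T k x \<longleftrightarrow> rel_chain A T k x \<and> (\<forall>C. d T x C \<in> span (v ` A))"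

definition rel_boundary :: "'a set \<Rightarrow> 'a set \<Rightarrow> int \<Rightarrow> ('a set \<Rightarrow> 'w) \<Rightarrow> bool" where
  "rel_boundary A T k x \<longleftrightarrow>
     (\<exists>y. rel_chain A T (k - 1) y \<and> (\<forall>B. x B - d T y B \<in> span (v ` A)))"

definition rel_exact :: "'a set \<Rightarrow> 'a set \<Rightarrow> int \<Rightarrow> bool" where
  "rel_exact A T k \<longleftrightarrow> (\<forall>x. rel_cycle A T k x \<longrightarrow> rel_boundary A T k x)"

definition rel_rank :: "'a set \<Rightarrow> 'a set \<Rightarrow> nat" where
  "rel_rank A T = dim (v ` (A \<union> T)) - dim (v ` A)"

lemma coeff_mono: "B \<subseteq> B' \<Longrightarrow> coeff A B \<subseteq> coeff A B'"
  unfolding coeff_def by (intro span_mono) auto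

lemma rel_chainD:
  assumes "rel_chain A T k x"
  shows "x B \<in> coeff A B" "x B \<noteq> 0 \<Longrightarrow> B \<subseteq> T" "x B \<noteq> 0 \<Longrightarrow> int (card B) = k"
  using assms by (auto simp: rel_chain_def)

lemma rel_chainI:
  "(\<And>B. x B \<in> coeff A B) \<Longrightarrow> (\<And>B. x B \<noteq> 0 \<Longrightarrow> B \<subseteq> T \<and> int (card B) = k) \<Longrightarrow>
    rel_chain A T k x"
  by (simp add: rel_chain_def)

lemma rel_chain_zero: "rel_chain A T k (\<lambda>B. 0)"
  by (simp add: rel_chain_def coeff_def span_zero)

lemma rel_chain_add:
  assumes "rel_chain A T k x" "rel_chain A T k y"
  shows "rel_chain A T k (\<lambda>B. x B + y B)"
proof (rule rel_chainI)
  show "x B + y B \<in> coeff A B" for B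
    using assms rel_chainD(1) coeff_def span_add by metis
  show "B \<subseteq> T \<and> int (card B) = k" if "x B + y B \<noteq> 0" for B
    using that assms rel_chainD(2,3) by (metis add.left_neutral add.right_neutral)
qed

lemma rel_chain_diff:
  assumes "rel_chain A T k x" "rel_chain A T k y"
  shows "rel_chain A T k (\<lambda>B. x B - y B)"
proof (rule rel_chainI)
  show "x B - y B \<in> coeff A B" for B
    using assms rel_chainD(1) coeff_def span_diff by metis
  show "B \<subseteq> T \<and> int (card B) = k" if "x B - y B \<noteq> 0" for B
    using that assms rel_chainD(2,3) by (metis diff_self diff_zero)
qed

lemma rel_chain_mono: "rel_chain A T k x \<Longrightarrow> T \<subseteq> T' \<Longrightarrow> rel_chain A T' k x"
  unfolding rel_chain_def by blast

lemma rel_chain_diffV: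
  assumes "finite T" "rel_chain A T k y"
  shows "rel_chain A T (k + 1) (d T y)"
proof (rule rel_chainI)
  fix C
  have "y (C - {c}) \<in> coeff A C" for c
    using rel_chainD(1)[OF assms(2)] coeff_mono[of "C - {c}" C A] by blast
  then show "d T y C \<in> coeff A C"
    unfolding coeff_def
    by (cases "C \<subseteq> T") (auto simp: diffV_subset diffV_not_subset span_zero intro!: span_sum span_scale)
next
  fix C
  assume nz: "d T y C \<noteq> 0"
  then have "C \<subseteq> T"
    using diffV_not_subset by blast
  moreover obtain c where c: "c \<in> C" "y (C - {c}) \<noteq> 0"
    using nz \<open>C \<subseteq> T\<close> by (force simp: diffV_subset intro: sum.neutral)
  moreover have "finite C"
    using \<open>C \<subseteq> T\<close> assms(1) finite_subset by blast
  moreover have "card C > 0"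
    using c(1) \<open>finite C\<close> card_gt_0_iff by blast
  ultimately show "C \<subseteq> T \<and> int (card C) = k + 1"
    using rel_chainD(3)[OF assms(2) c(2)] by (simp add: card_Diff_singleton_if of_nat_diff)
qed

lemma rel_chain_cone:
  assumes "finite T" "rel_chain A T k x" "\<And>B. e \<notin> B \<Longrightarrow> x (insert e B) \<in> coeff A B"
  shows "rel_chain A T (k - 1) (cone e x)"
proof (rule rel_chainI)
  show "cone e x B \<in> coeff A B" for B
    using assms(3) by (simp add: cone_def coeff_def span_scale span_zero)
  fix B
  assume "cone e x B \<noteq> 0"
  then have e: "e \<notin> B" and nz: "x (insert e B) \<noteq> 0"
    by (auto simp: cone_def split: if_splits)
  have "insert e B \<subseteq> T"
    by (rule rel_chainD(2)[OF assms(2) nz])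
  moreover have "int (card (insert e B)) = k"
    by (rule rel_chainD(3)[OF assms(2) nz])
  moreover have "finite (insert e B)"
    using finite_subset[OF calculation(1) assms(1)] .
  ultimately show "B \<subseteq> T \<and> int (card B) = k - 1"
    using e by simp
qed

lemma rel_boundary_add:
  assumes "rel_boundary A T k x" "rel_boundary A T k x'"
  shows "rel_boundary A T k (\<lambda>B. x B + x' B)"
proof -
  obtain y y' where y: "rel_chain A T (k - 1) y" "\<And>B. x B - d T y B \<in> span (v ` A)"
    and y': "rel_chain A T (k - 1) y'" "\<And>B. x' B - d T y' B \<in> span (v ` A)"
    using assms unfolding rel_boundary_def by blast
  have eq: "x B + x' B - d T (\<lambda>B. y B + y' B) B = (x B - d T y B) + (x' B - d T y' B)" for B
    by (simp add: diffV_add algebra_simps)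
  have "x B + x' B - d T (\<lambda>B. y B + y' B) B \<in> span (v ` A)" for B
    unfolding eq by (rule span_add[OF y(2) y'(2)])
  then show ?thesis
    unfolding rel_boundary_def using rel_chain_add[OF y(1) y'(1)] by blast
qed

lemma rel_boundary_span_rel:
  assumes "\<And>B. x B \<in> span (v ` A)"
  shows "rel_boundary A T k x"
  unfolding rel_boundary_def using assms rel_chain_zero diffV_zero by (intro exI[of _ "\<lambda>B. 0"]) simp

lemma rel_boundary_cone:
  assumes "finite T" "T \<subseteq> S0" "e \<in> T" "rel_cycle A T k x" "rel_chain A T (k - 1) (cone e x)"
  shows "rel_boundary A T k x"
  unfolding rel_boundary_def
proof (intro exI conjI allI)
  fix B
  have "d T (cone e x) B + cone e (d T x) B = x B"
    using diffV_cone_plus_cone_diffV[OF assms(1-3)] assms(4) rel_chainD(2)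
    unfolding rel_cycle_def by blast
  then have "x B - d T (cone e x) B = cone e (d T x) B"
    by (simp add: algebra_simps)
  also have "\<dots> \<in> span (v ` A)"
    using assms(4) by (intro cone_in_subspace) (auto simp: rel_cycle_def)
  finally show "x B - d T (cone e x) B \<in> span (v ` A)" .
qed (rule assms(5))

lemma rel_exact_degenerate:
  assumes "finite T" "k \<le> 0 \<or> k > int (card T)"
  shows "rel_exact A T k"
  unfolding rel_exact_def
proof (intro allI impI rel_boundary_span_rel)
  fix x B
  assume x: "rel_cycle A T k x"
  show "x B \<in> span (v ` A)"
  proof (cases "x B = 0")
    case True
    then show ?thesis
      by (simp add: span_zero)
  next
    case False
    then have B: "B \<subseteq> T" "int (card B) = k"
      using x rel_chainD(2,3) unfolding rel_cycle_def by blast+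
    then have "B = {}"
      using assms card_mono[OF assms(1) B(1)] finite_subset[OF B(1) assms(1)] by auto
    then show ?thesis
      using rel_chainD(1)[of A T k x B] x by (simp add: rel_cycle_def coeff_def)
  qed
qed

lemma rel_exact_loop:
  assumes "finite T" "T \<subseteq> S0" "a \<in> T" "v a \<in> span (v ` A)"
  shows "rel_exact A T k"
  unfolding rel_exact_def
proof (intro allI impI)
  fix x
  assume x: "rel_cycle A T k x"
  have "coeff A (insert a B) = coeff A B" for B
  proof -
    have "v a \<in> span (v ` (A \<union> B))"
      using assms(4) span_mono[of "v ` A" "v ` (A \<union> B)"] by blast
    then show ?thesis
      unfolding coeff_def by (simp add: span_redundant)
  qed
  then have "rel_chain A T (k - 1) (cone a x)"
    using x rel_chain_cone[OF assms(1)] rel_chainD(1) unfolding rel_cycle_def by metis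
  then show "rel_boundary A T k x"
    using rel_boundary_cone[OF assms(1-3) x] by blast
qed

lemma rel_boundary_cone_vertex:
  assumes "finite T" "T \<subseteq> S0" "c \<in> T" "c \<noteq> a" "rel_cycle A T k x"
    and "\<And>B. a \<notin> B \<Longrightarrow> x B = 0" "\<And>B. x B \<in> span (v ` insert a A)"
  shows "rel_boundary A T k x"
proof (rule rel_boundary_cone[OF assms(1-3,5)])
  have "x (insert c B) \<in> coeff A B" for B
  proof (cases "a \<in> B")
    case True
    then have "span (v ` insert a A) \<subseteq> coeff A B"
      unfolding coeff_def by (intro span_mono) auto
    then show ?thesis
      using assms(7) by blast
  next
    case False
    then show ?thesis
      using assms(4,6) by (simp add: coeff_def span_zero)
  qed
  then show "rel_chain A T (k - 1) (cone c x)"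
    using rel_chain_cone[OF assms(1)] assms(5) unfolding rel_cycle_def by blast
qed

lemma coloop_decomposition:
  assumes "rel_chain A T k x"
  obtains x1 x2 where "\<And>B. x B = x1 B + x2 B" "\<And>B. x1 B \<in> span (v ` (A \<union> (B - {a})))"
    "\<And>B. x2 B \<in> span {v a}" "\<And>B. a \<notin> B \<or> x B = 0 \<Longrightarrow> x2 B = 0"
proof -
  have "\<exists>t. x B - sc t (v a) \<in> span (v ` (A \<union> (B - {a})))" if "a \<in> B" for B
  proof -
    have "A \<union> B = insert a (A \<union> (B - {a}))"
      using that by auto
    then have "x B \<in> span (insert (v a) (v ` (A \<union> (B - {a}))))"
      using rel_chainD(1)[OF assms, of B] by (simp add: coeff_def)
    then show ?thesis
      by (simp add: span_breakdown_eq)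
  qed
  then obtain t where t: "\<And>B. a \<in> B \<Longrightarrow> x B - sc (t B) (v a) \<in> span (v ` (A \<union> (B - {a})))"
    by metis
  define x2 where "x2 B = (if a \<in> B \<and> x B \<noteq> 0 then sc (t B) (v a) else 0)" for B
  show thesis
  proof (rule that[of "\<lambda>B. x B - x2 B" x2])
    show "x B - x2 B \<in> span (v ` (A \<union> (B - {a})))" for B
    proof (cases "a \<in> B \<and> x B \<noteq> 0")
      case True
      then show ?thesis
        using t by (simp add: x2_def)
    next
      case False
      moreover have "a \<notin> B \<Longrightarrow> x B \<in> span (v ` (A \<union> (B - {a})))"
        using rel_chainD(1)[OF assms, of B] by (simp add: coeff_def)
      ultimately show ?thesis
        by (auto simp: x2_def span_zero)
    qed
  qed (auto simp: x2_def span_zero span_scale span_base)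
qed

lemma rel_chain_coloop_split:
  assumes "rel_chain A T k x"
  obtains x1 x2 where "x = (\<lambda>B. x1 B + x2 B)" "rel_chain A T k x1" "rel_chain A T k x2"
    "\<And>B. x1 B \<in> span (v ` (A \<union> (B - {a})))" "\<And>B. x2 B \<in> span {v a}" "\<And>B. a \<notin> B \<Longrightarrow> x2 B = 0"
proof -
  obtain x1 x2 where x12: "\<And>B. x B = x1 B + x2 B" and x1: "\<And>B. x1 B \<in> span (v ` (A \<union> (B - {a})))"
    and x2: "\<And>B. x2 B \<in> span {v a}" "\<And>B. a \<notin> B \<or> x B = 0 \<Longrightarrow> x2 B = 0"
    using coloop_decomposition[OF assms] by metis
  have support: "B \<subseteq> T \<and> int (card B) = k" if "x B \<noteq> 0" for B
    using rel_chainD(2,3)[OF assms that] by blast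
  have "rel_chain A T k x1"
  proof (rule rel_chainI)
    fix B
    have "span (v ` (A \<union> (B - {a}))) \<subseteq> coeff A B"
      unfolding coeff_def by (intro span_mono) auto
    then show "x1 B \<in> coeff A B"
      using x1 by blast
    assume "x1 B \<noteq> 0"
    then have "x B \<noteq> 0"
      using x12[of B] x2(2)[of B] by auto
    then show "B \<subseteq> T \<and> int (card B) = k"
      by (rule support)
  qed
  moreover have "rel_chain A T k x2"
  proof (rule rel_chainI)
    fix B
    show "x2 B \<in> coeff A B"
    proof (cases "a \<in> B")
      case True
      then have "span {v a} \<subseteq> coeff A B"
        unfolding coeff_def by (intro span_mono) auto
      then show ?thesis
        using x2(1) by blast
    qed (simp add: x2(2) coeff_def span_zero)
    assume "x2 B \<noteq> 0"
    then have "x B \<noteq> 0"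
      using x2(2) by blast
    then show "B \<subseteq> T \<and> int (card B) = k"
      by (rule support)
  qed
  moreover have "x = (\<lambda>B. x1 B + x2 B)"
    by (rule ext) (rule x12)
  ultimately show thesis
    using that x1 x2 by blast
qed

text \<open>The boundary of the part along a coloop lies both on the line through \<open>v a\<close> and in the
  span of the remaining vectors, hence vanishes.\<close>

lemma diffV_coloop_part:
  assumes "v a \<notin> span (v ` (A \<union> (T - {a})))" "rel_cycle A T k (\<lambda>B. x1 B + x2 B)"
    and "rel_chain A T k x1" "\<And>B. x1 B \<in> span (v ` (A \<union> (B - {a})))" "\<And>B. x2 B \<in> span {v a}"
  shows "d T x2 C = 0"
proof (rule span_singleton_inter_eq_zero[OF assms(1)])
  let ?M = "span (v ` (A \<union> (T - {a})))"
  show "d T x2 C \<in> span {v a}"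
    using assms(5) by (rule diffV_in_subspace[OF subspace_span])
  have "x1 B \<in> ?M" for B
    using assms(4)[of B] rel_chainD(2)[OF assms(3), of B] span_zero
      span_mono[of "v ` (A \<union> (B - {a}))" "v ` (A \<union> (T - {a}))"] by (cases "x1 B = 0") auto
  then have "d T x1 C \<in> ?M"
    by (rule diffV_in_subspace[OF subspace_span])
  moreover have "d T (\<lambda>B. x1 B + x2 B) C \<in> ?M"
    using assms(2) span_mono[of "v ` A" "v ` (A \<union> (T - {a}))"] unfolding rel_cycle_def by blast
  ultimately have "d T (\<lambda>B. x1 B + x2 B) C - d T x1 C \<in> ?M"
    using span_diff by blast
  then show "d T x2 C \<in> ?M"
    using diffV_add[of T x1 x2 C] by simp
qed

lemma rel_exact_coloop:
  assumes "finite T" "T \<subseteq> S0" "a \<in> T" "c \<in> T" "c \<noteq> a"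
    and coloop: "v a \<notin> span (v ` (A \<union> (T - {a})))"
  shows "rel_exact A T k"
  unfolding rel_exact_def
proof (intro allI impI)
  fix x
  assume x: "rel_cycle A T k x"
  then have "rel_chain A T k x"
    by (simp add: rel_cycle_def)
  then obtain x1 x2 where x12: "x = (\<lambda>B. x1 B + x2 B)" and chains: "rel_chain A T k x1" "rel_chain A T k x2"
    and x1: "\<And>B. x1 B \<in> span (v ` (A \<union> (B - {a})))"
    and x2: "\<And>B. x2 B \<in> span {v a}" "\<And>B. a \<notin> B \<Longrightarrow> x2 B = 0"
    using rel_chain_coloop_split[where a = a] by blast
  have "rel_cycle A T k (\<lambda>B. x1 B + x2 B)"
    using x x12 by simp
  note dx2 = diffV_coloop_part[OF coloop this chains(1) x1 x2(1)]
  have "rel_cycle A T k x1"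
    using x chains(1) dx2 diffV_add[of T x1 x2] unfolding x12 rel_cycle_def by simp
  moreover have "rel_chain A T (k - 1) (cone a x1)"
  proof (rule rel_chain_cone[OF assms(1) chains(1)])
    fix B
    assume "a \<notin> B"
    then show "x1 (insert a B) \<in> coeff A B"
      using x1[of "insert a B"] by (simp add: coeff_def)
  qed
  ultimately have "rel_boundary A T k x1"
    by (rule rel_boundary_cone[OF assms(1-3)])
  moreover have "rel_cycle A T k x2"
    using chains(2) dx2 by (simp add: rel_cycle_def span_zero)
  moreover have "x2 B \<in> span (v ` insert a A)" for B
    using x2(1) span_mono[of "{v a}" "v ` insert a A"] by blast
  ultimately show "rel_boundary A T k x"
    unfolding x12 using rel_boundary_cone_vertex[OF assms(1,2,4,5)] x2(2) rel_boundary_add by blast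
qed

lemma diffV_restrict:
  assumes "C \<subseteq> T'" "T' \<subseteq> T" "\<And>B. B \<subseteq> C \<Longrightarrow> x B = x' B"
  shows "d T' x C = d T x' C"
  using assms by (auto simp: diffV_subset intro!: sum.cong)

text \<open>Since the deleted element is \<open>\<omega>\<close>-maximal, adjoining it does not change any sign.\<close>

lemma diffV_link:
  assumes "finite T" "a \<in> T" "\<forall>c\<in>T. \<not> prec a c" "C \<subseteq> T - {a}" "u C = 0"
  shows "d (T - {a}) (\<lambda>B. if a \<notin> B then u (insert a B) else 0) C = d T u (insert a C)"
proof -
  have aC: "a \<notin> C" and "finite C"
    using assms(1,4) finite_subset by auto
  have sign: "sg c (insert a (C - {c})) = sg c (C - {c})" if "c \<in> C" for c
  proof -
    have "c \<in> T" "a \<noteq> c"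
      using that assms(4) by auto
    then show ?thesis
      using sortsign_insert[of "C - {c}" a c] assms(3) aC \<open>finite C\<close> by auto
  qed
  have ins: "insert a C - {c} = insert a (C - {c})" if "c \<in> C" for c
    using that aC by auto
  have "insert a C \<subseteq> T"
    using assms(2,4) by blast
  then have "d T u (insert a C)
      = (\<Sum>c\<in>insert a C. sc (sg c (insert a C - {c})) (u (insert a C - {c})))"
    by (rule diffV_subset)
  also have "\<dots> = sc (sg a C) (u C) + (\<Sum>c\<in>C. sc (sg c (insert a C - {c})) (u (insert a C - {c})))"
    using aC \<open>finite C\<close> by simp
  also have "(\<Sum>c\<in>C. sc (sg c (insert a C - {c})) (u (insert a C - {c})))
      = (\<Sum>c\<in>C. sc (sg c (C - {c})) (u (insert a (C - {c}))))"
    by (rule sum.cong) (simp_all add: sign ins)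
  also have "sc (sg a C) (u C) + (\<Sum>c\<in>C. sc (sg c (C - {c})) (u (insert a (C - {c}))))
      = d (T - {a}) (\<lambda>B. if a \<notin> B then u (insert a B) else 0) C"
    using assms(4,5) aC by (simp add: diffV_subset)
  finally show ?thesis ..
qed

lemma rel_chain_join:
  assumes "finite T" "a \<in> T" "rel_chain (insert a A) (T - {a}) k y"
  shows "rel_chain A T (k + 1) (\<lambda>B. if a \<in> B then y (B - {a}) else 0)"
proof (rule rel_chainI)
  fix B
  show "(if a \<in> B then y (B - {a}) else 0) \<in> coeff A B"
  proof (cases "a \<in> B")
    case True
    then have "insert a A \<union> (B - {a}) = A \<union> B"
      by auto
    then show ?thesis
      using rel_chainD(1)[OF assms(3), of "B - {a}"] True by (simp add: coeff_def)
  qed (simp add: coeff_def span_zero)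
  assume "(if a \<in> B then y (B - {a}) else 0) \<noteq> 0"
  then have aB: "a \<in> B" and nz: "y (B - {a}) \<noteq> 0"
    by (auto split: if_splits)
  have sub: "B - {a} \<subseteq> T - {a}"
    by (rule rel_chainD(2)[OF assms(3) nz])
  have card: "int (card (B - {a})) = k"
    by (rule rel_chainD(3)[OF assms(3) nz])
  have "B \<subseteq> T"
    using sub aB assms(2) by blast
  moreover have "finite B"
    using finite_subset[OF \<open>B \<subseteq> T\<close> assms(1)] .
  moreover have "card B > 0"
    using aB \<open>finite B\<close> card_gt_0_iff by blast
  ultimately show "B \<subseteq> T \<and> int (card B) = k + 1"
    using aB card by (simp add: card_Diff_singleton of_nat_diff)
qed

lemma rel_cycle_deletion:
  assumes "rel_cycle A T k x"
  shows "rel_cycle A (T - {a}) k (\<lambda>B. if a \<in> B then 0 else x B)"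
proof -
  have x: "rel_chain A T k x" "\<And>C. d T x C \<in> span (v ` A)"
    using assms by (auto simp: rel_cycle_def)
  have "rel_chain A (T - {a}) k (\<lambda>B. if a \<in> B then 0 else x B)"
    using rel_chainD[OF x(1)] by (intro rel_chainI) (auto simp: coeff_def span_zero split: if_splits)
  moreover have "d (T - {a}) (\<lambda>B. if a \<in> B then 0 else x B) C \<in> span (v ` A)" for C
  proof (cases "C \<subseteq> T - {a}")
    case True
    then have "d (T - {a}) (\<lambda>B. if a \<in> B then 0 else x B) C = d T x C"
      by (intro diffV_restrict) auto
    then show ?thesis
      using x(2) by simp
  qed (simp add: diffV_not_subset span_zero)
  ultimately show ?thesis
    by (simp add: rel_cycle_def)
qed

lemma rel_cycle_deletion_reduce:
  assumes "finite T" "T \<subseteq> S0" "a \<in> T" "rel_exact A (T - {a}) k" "rel_cycle A T k x"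
  obtains p where "rel_cycle A T k p" "\<And>B. a \<notin> B \<Longrightarrow> p B = 0"
    "rel_boundary A T k (\<lambda>B. x B - p B)"
proof -
  let ?Z = "span (v ` A)"
  have x: "rel_chain A T k x" "\<And>C. d T x C \<in> ?Z"
    using assms(5) by (auto simp: rel_cycle_def)
  define q where "q B = (if a \<in> B then 0 else x B)" for B
  obtain y where y: "rel_chain A (T - {a}) (k - 1) y" "\<And>B. q B - d (T - {a}) y B \<in> ?Z"
    using assms(4) rel_cycle_deletion[OF assms(5), of a] unfolding rel_exact_def rel_boundary_def q_def
    by blast
  define x1 where "x1 B = x B - d T y B" for B
  have x1_Z: "x1 B \<in> ?Z" if "a \<notin> B" for B
  proof (cases "B \<subseteq> T")
    case True
    then have "B \<subseteq> T - {a}"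
      using that by blast
    then have "d T y B = d (T - {a}) y B"
      using diffV_restrict[of B "T - {a}" T y y] by simp
    then show ?thesis
      using y(2)[of B] that by (simp add: x1_def q_def)
  next
    case False
    then have "x B = 0"
      using rel_chainD(2)[OF x(1)] by blast
    then show ?thesis
      using False by (simp add: x1_def diffV_not_subset span_zero)
  qed
  define p where "p B = (if a \<in> B then x1 B else 0)" for B
  have y_chain: "rel_chain A T (k - 1) y"
    using rel_chain_mono[OF y(1)] by blast
  have "rel_chain A T k (d T y)"
    using rel_chain_diffV[OF assms(1) y_chain] by simp
  then have "rel_chain A T k x1"
    unfolding x1_def by (rule rel_chain_diff[OF x(1)])
  then have p_chain: "rel_chain A T k p"
    using rel_chainD by (intro rel_chainI) (auto simp: p_def coeff_def span_zero split: if_splits)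
  have "d T p C \<in> ?Z" for C
  proof -
    have "p = (\<lambda>B. x1 B - (if a \<in> B then 0 else x1 B))"
      by (simp add: p_def fun_eq_iff)
    then have "d T p C = d T x1 C - d T (\<lambda>B. if a \<in> B then 0 else x1 B) C"
      using diffV_diff[of T x1] by simp
    moreover have "x1 = (\<lambda>B. x B - d T y B)"
      by (simp add: x1_def fun_eq_iff)
    then have "d T x1 C = d T x C"
      using diffV_diff[of T x "d T y"] diffV_diffV[OF assms(1,2)] by simp
    ultimately have "d T p C = d T x C - d T (\<lambda>B. if a \<in> B then 0 else x1 B) C"
      by simp
    moreover have "d T (\<lambda>B. if a \<in> B then 0 else x1 B) C \<in> ?Z"
      using x1_Z by (intro diffV_in_subspace) (auto simp: span_zero)
    ultimately show ?thesis
      using x(2)[of C] span_diff by simp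
  qed
  then have "rel_cycle A T k p"
    using p_chain by (simp add: rel_cycle_def)
  moreover have "rel_boundary A T k (\<lambda>B. x B - p B)"
    unfolding rel_boundary_def
  proof (intro exI conjI allI)
    show "rel_chain A T (k - 1) y"
      by (rule y_chain)
    show "x B - p B - d T y B \<in> ?Z" for B
      using x1_Z[of B] by (cases "a \<in> B") (simp_all add: p_def x1_def span_zero)
  qed
  ultimately show thesis
    using that by (simp add: p_def)
qed

lemma rel_cycle_link:
  assumes "finite T" "a \<in> T" "\<forall>c\<in>T. \<not> prec a c"
    and p: "rel_cycle A T k p" "\<And>B. a \<notin> B \<Longrightarrow> p B = 0"
  shows "rel_cycle (insert a A) (T - {a}) (k - 1) (\<lambda>B. if a \<notin> B then p (insert a B) else 0)"
proof -
  let ?Z = "span (v ` A)" and ?Z' = "span (v ` insert a A)"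
  have p_chain: "rel_chain A T k p" and dp: "\<And>C. d T p C \<in> ?Z"
    using p(1) by (auto simp: rel_cycle_def)
  define g where "g B = (if a \<notin> B then p (insert a B) else 0)" for B
  have "rel_chain (insert a A) (T - {a}) (k - 1) g"
  proof (rule rel_chainI)
    fix B
    have "A \<union> insert a B = insert a A \<union> B"
      by auto
    then show "g B \<in> coeff (insert a A) B"
      using rel_chainD(1)[OF p_chain, of "insert a B"] by (simp add: g_def coeff_def span_zero)
    assume "g B \<noteq> 0"
    then have aB: "a \<notin> B" and nz: "p (insert a B) \<noteq> 0"
      by (auto simp: g_def split: if_splits)
    have "insert a B \<subseteq> T" "int (card (insert a B)) = k"
      using rel_chainD(2)[OF p_chain nz] rel_chainD(3)[OF p_chain nz] by simp_all
    moreover have "finite B"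
      using calculation(1) assms(1) finite_subset by auto
    ultimately show "B \<subseteq> T - {a} \<and> int (card B) = k - 1"
      using aB by auto
  qed
  moreover have "d (T - {a}) g C \<in> ?Z'" for C
  proof (cases "C \<subseteq> T - {a}")
    case True
    then have "d (T - {a}) g C = d T p (insert a C)"
      unfolding g_def using diffV_link[OF assms(1-3) True] p(2) by blast
    moreover have "?Z \<subseteq> ?Z'"
      by (intro span_mono) auto
    ultimately show ?thesis
      using dp by auto
  qed (simp add: diffV_not_subset span_zero)
  ultimately show ?thesis
    by (simp add: rel_cycle_def g_def[abs_def])
qed

lemma diffV_join:
  assumes "finite T" "a \<in> T" "\<forall>c\<in>T. \<not> prec a c" "rel_chain (insert a A) (T - {a}) j y"
    and "B \<subseteq> T - {a}"
  shows "d T (\<lambda>C. if a \<in> C then y (C - {a}) else 0) (insert a B) = d (T - {a}) y B"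
proof -
  define u where "u C = (if a \<in> C then y (C - {a}) else 0)" for C
  have "(\<lambda>C. if a \<notin> C then u (insert a C) else 0) = y"
    using rel_chainD(2)[OF assms(4)] by (auto simp: u_def fun_eq_iff)
  moreover have "u B = 0"
    using assms(5) by (auto simp: u_def)
  ultimately have "d (T - {a}) y B = d T u (insert a B)"
    using diffV_link[OF assms(1-3,5), of u] by simp
  then show ?thesis
    by (simp add: u_def[abs_def])
qed

lemma rel_cycle_contraction_reduce:
  assumes "finite T" "T \<subseteq> S0" "a \<in> T" "\<forall>c\<in>T. \<not> prec a c"
    and "rel_exact (insert a A) (T - {a}) (k - 1)"
    and p: "rel_cycle A T k p" "\<And>B. a \<notin> B \<Longrightarrow> p B = 0"
  obtains x where "rel_cycle A T k x" "\<And>B. a \<notin> B \<Longrightarrow> x B = 0"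
    "\<And>B. x B \<in> span (v ` insert a A)" "rel_boundary A T k (\<lambda>B. p B - x B)"
proof -
  let ?Z = "span (v ` A)" and ?Z' = "span (v ` insert a A)"
  have p_chain: "rel_chain A T k p" and dp: "\<And>C. d T p C \<in> ?Z"
    using p(1) by (auto simp: rel_cycle_def)
  define g where "g B = (if a \<notin> B then p (insert a B) else 0)" for B
  have "rel_cycle (insert a A) (T - {a}) (k - 1) g"
    unfolding g_def by (rule rel_cycle_link[OF assms(1,3,4) p])
  then obtain y where y: "rel_chain (insert a A) (T - {a}) (k - 1 - 1) y"
    "\<And>B. g B - d (T - {a}) y B \<in> ?Z'"
    using assms(5) unfolding rel_exact_def rel_boundary_def by blast
  define yh where "yh = (\<lambda>B. if a \<in> B then y (B - {a}) else 0)"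
  have yh_chain: "rel_chain A T (k - 1) yh"
    using rel_chain_join[OF assms(1,3) y(1)] by (simp add: yh_def)
  define x where "x B = p B - d T yh B" for B
  have "x = (\<lambda>B. p B - d T yh B)"
    by (simp add: x_def fun_eq_iff)
  then have "d T x C = d T p C" for C
    using diffV_diff[of T p "d T yh"] diffV_diffV[OF assms(1,2)] by simp
  moreover have "rel_chain A T k x"
    unfolding x_def using rel_chain_diff[OF p_chain] rel_chain_diffV[OF assms(1) yh_chain] by simp
  ultimately have "rel_cycle A T k x"
    using dp by (simp add: rel_cycle_def)
  moreover have x_out: "x B = 0" if "a \<notin> B" for B
    using that p(2) by (simp add: x_def yh_def diffV_def)
  moreover have "x B \<in> ?Z'" for B
  proof (cases "a \<in> B \<and> B \<subseteq> T")
    case True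
    define B' where "B' = B - {a}"
    have B: "B = insert a B'" "a \<notin> B'" "B' \<subseteq> T - {a}"
      using True by (auto simp: B'_def)
    then have "d T yh B = d (T - {a}) y B'"
      unfolding yh_def using diffV_join[OF assms(1,3,4) y(1) B(3)] by simp
    then have "x B = g B' - d (T - {a}) y B'"
      using B by (simp add: x_def g_def)
    then show ?thesis
      using y(2) by simp
  next
    case False
    have "x B = 0"
    proof (cases "a \<in> B")
      case True
      then have "\<not> B \<subseteq> T"
        using False by blast
      then show ?thesis
        using rel_chainD(2)[OF p_chain, of B] by (auto simp: x_def diffV_not_subset)
    qed (rule x_out)
    then show ?thesis
      by (simp add: span_zero)
  qed
  moreover have "rel_boundary A T k (\<lambda>B. p B - x B)"
    unfolding rel_boundary_def using yh_chain by (auto simp: x_def span_zero)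
  ultimately show thesis
    using that by blast
qed

lemma rel_exact_deletion_contraction:
  assumes "finite T" "T \<subseteq> S0" "a \<in> T" "\<forall>c\<in>T. \<not> prec a c" "c \<in> T" "c \<noteq> a"
    and "rel_exact A (T - {a}) k" "rel_exact (insert a A) (T - {a}) (k - 1)"
  shows "rel_exact A T k"
  unfolding rel_exact_def
proof (intro allI impI)
  fix x
  assume "rel_cycle A T k x"
  then obtain p where p: "rel_cycle A T k p" "\<And>B. a \<notin> B \<Longrightarrow> p B = 0"
    and xp: "rel_boundary A T k (\<lambda>B. x B - p B)"
    using rel_cycle_deletion_reduce[OF assms(1-3,7)] by blast
  then obtain x' where x': "rel_cycle A T k x'" "\<And>B. a \<notin> B \<Longrightarrow> x' B = 0"
    "\<And>B. x' B \<in> span (v ` insert a A)" and px': "rel_boundary A T k (\<lambda>B. p B - x' B)"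
    using rel_cycle_contraction_reduce[OF assms(1-4,8)] by blast
  have "rel_boundary A T k x'"
    using rel_boundary_cone_vertex[OF assms(1,2,5,6) x'] .
  then have "rel_boundary A T k (\<lambda>B. (x B - p B) + ((p B - x' B) + x' B))"
    using rel_boundary_add[OF xp rel_boundary_add[OF px']] by blast
  then show "rel_boundary A T k x"
    by simp
qed

lemma rel_rank_singleton:
  assumes "finite A" "v a \<notin> span (v ` A)"
  shows "rel_rank A {a} = 1"
  using dim_insert_finite_span[of "v ` A" "v ` A" "v a"] assms by (simp add: rel_rank_def span_superset)

lemma rel_rank_generic:
  assumes "finite T" "finite A" "a \<in> T"
    and "v a \<notin> span (v ` A)" "v a \<in> span (v ` (A \<union> (T - {a})))"
  shows "int (rel_rank (insert a A) (T - {a})) = int (rel_rank A T) - 1"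
    and "rel_rank A (T - {a}) = rel_rank A T"
proof -
  have fin: "finite (v ` (A \<union> (T - {a})))" "finite (v ` A)"
    using assms(1,2) by auto
  have "A \<union> T = insert a (A \<union> (T - {a}))" "insert a A \<union> (T - {a}) = A \<union> T"
    using assms(3) by auto
  moreover have "dim (v ` (A \<union> T)) = dim (v ` (A \<union> (T - {a})))"
    using dim_insert_finite_span[OF fin(1) span_superset, of "v a"] assms(5) calculation(1) by simp
  moreover have "dim (v ` insert a A) = dim (v ` A) + 1"
    using dim_insert_finite_span[OF fin(2) span_superset, of "v a"] assms(4) by simp
  moreover have "dim (v ` insert a A) \<le> dim (v ` (A \<union> T))"
    using dim_mono_finite[of "v ` insert a A" "v ` (A \<union> T)"] assms(1-3)
    by (auto intro: span_base)
  ultimately show "int (rel_rank (insert a A) (T - {a})) = int (rel_rank A T) - 1"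
    "rel_rank A (T - {a}) = rel_rank A T"
    by (simp_all add: rel_rank_def)
qed

lemma rel_exact_off_rank:
  assumes "finite T" "T \<subseteq> S0" "finite A" "k \<noteq> int (rel_rank A T)"
  shows "rel_exact A T k"
  using assms
proof (induction "card T" arbitrary: T A k rule: less_induct)
  case less
  show ?case
  proof (cases "T = {}")
    case True
    then show ?thesis
      using rel_exact_degenerate[OF less.prems(1)] by force
  next
    case False
    obtain a where a: "a \<in> T" "\<forall>c\<in>T. \<not> prec a c"
      using ex_maximal[OF less.prems(1) False] by blast
    define T' where "T' = T - {a}"
    have T': "finite T'" "T' \<subseteq> S0"
      using less.prems(1,2) by (auto simp: T'_def)
    consider (loop) "v a \<in> span (v ` A)"
      | (coloop) "v a \<notin> span (v ` (A \<union> T'))"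
      | (generic) "v a \<notin> span (v ` A)" "v a \<in> span (v ` (A \<union> T'))"
      by blast
    then show ?thesis
    proof cases
      case loop
      then show ?thesis
        using rel_exact_loop[OF less.prems(1,2) a(1)] by blast
    next
      case coloop
      show ?thesis
      proof (cases "T' = {}")
        case True
        then have "T = {a}"
          using a by (auto simp: T'_def)
        moreover have "v a \<notin> span (v ` A)"
          using coloop span_mono[of "v ` A" "v ` (A \<union> T')"] by blast
        ultimately have "rel_rank A T = 1"
          using rel_rank_singleton[OF less.prems(3)] by simp
        then have "k \<le> 0 \<or> k > int (card T)"
          using less.prems(4) \<open>T = {a}\<close> by auto
        then show ?thesis
          using rel_exact_degenerate[OF less.prems(1)] by blast
      next
        case False
        then obtain c where "c \<in> T'"
          by blast
        then show ?thesis
          using rel_exact_coloop[OF less.prems(1,2) a(1), of c] coloop by (auto simp: T'_def)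
      qed
    next
      case generic
      then have "T' \<noteq> {}"
        by auto
      then obtain c where c: "c \<in> T'"
        by blast
      have card_less: "card T' < card T"
        unfolding T'_def using card_Diff1_less[OF less.prems(1) a(1)] .
      have "int (rel_rank (insert a A) T') = int (rel_rank A T) - 1" "rel_rank A T' = rel_rank A T"
        using rel_rank_generic[OF less.prems(1,3) a(1)] generic by (simp_all add: T'_def)
      then have "rel_exact A T' k" "rel_exact (insert a A) T' (k - 1)"
        using less.hyps[OF card_less T'] less.prems(3,4) by simp_all
      then show ?thesis
        using rel_exact_deletion_contraction[OF less.prems(1,2) a, of c] c by (auto simp: T'_def)
    qed
  qed
qed

section \<open>Euler characteristic\<close>

abbreviation chains :: "int \<Rightarrow> ('a set \<Rightarrow> 'w) set" where
  "chains k \<equiv> {x. rel_chain {} S0 k x}"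

lemma chains_eq_direct_sum:
  "chains k = direct_sum (\<lambda>B. span (v ` B)) {B. B \<subseteq> S0 \<and> int (card B) = k}"
  by (auto simp: rel_chain_def direct_sum_def coeff_def)

lemma chains_subspace: "C.subspace (chains k)"
  unfolding chains_eq_direct_sum by (rule direct_sum_subspace) simp

lemma chains_finite_span: "\<exists>X. finite X \<and> chains k \<subseteq> C.span X"
  unfolding chains_eq_direct_sum
  using finite_ground by (intro direct_sum_finite_span) (auto intro: finite_subset span_zero)

lemma dim_chains: "C.dim (chains k) = (\<Sum>B | B \<subseteq> S0 \<and> int (card B) = k. dim (v ` B))"
  unfolding chains_eq_direct_sum
  using finite_ground by (subst dim_direct_sum[of _ _ "\<lambda>B. v ` B"]) (auto intro: finite_subset)

lemma chains_eq_zero: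
  assumes "k < 0 \<or> k > int (card S0)"
  shows "chains k = {0}"
proof -
  have "x B = 0" if "rel_chain {} S0 k x" for x B
  proof (rule ccontr)
    assume "x B \<noteq> 0"
    then have "B \<subseteq> S0" "int (card B) = k"
      using rel_chainD(2,3)[OF that] by blast+
    moreover have "card B \<le> card S0"
      using \<open>B \<subseteq> S0\<close> finite_ground card_mono by blast
    ultimately show False
      using assms by auto
  qed
  then show ?thesis
    using rel_chain_zero[of "{}" S0 k] by (auto simp: fun_eq_iff zero_fun_def)
qed

lemma cycles_eq_boundaries:
  assumes "k \<noteq> int (rel_rank {} S0)"
  shows "{x \<in> chains k. d S0 x = 0} = d S0 ` chains (k - 1)"
proof
  have exact: "rel_exact {} S0 k"
    using rel_exact_off_rank[OF finite_ground order_refl _ assms] by simp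
  show "{x \<in> chains k. d S0 x = 0} \<subseteq> d S0 ` chains (k - 1)"
  proof
    fix x
    assume "x \<in> {x \<in> chains k. d S0 x = 0}"
    then have "rel_cycle {} S0 k x"
      by (simp add: rel_cycle_def span_zero)
    then obtain y where "rel_chain {} S0 (k - 1) y" "\<forall>B. x B - d S0 y B \<in> span (v ` {})"
      using exact unfolding rel_exact_def rel_boundary_def by blast
    then show "x \<in> d S0 ` chains (k - 1)"
      by (auto simp: fun_eq_iff image_iff)
  qed
  show "d S0 ` chains (k - 1) \<subseteq> {x \<in> chains k. d S0 x = 0}"
    using rel_chain_diffV[OF finite_ground, of "{}" "k - 1"] diffV_diffV[OF finite_ground order_refl]
    by (auto simp: fun_eq_iff)
qed

lemma dim_chains_eq_cycles_plus_boundaries: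
  "C.dim (chains k) = C.dim {x \<in> chains k. d S0 x = 0} + C.dim (d S0 ` chains k)"
proof -
  obtain X where X: "finite X" "chains k \<subseteq> C.span X"
    using chains_finite_span by blast
  show ?thesis
    by (rule linear.rank_nullity_finite_span[OF linear_diffV chains_subspace X(2,1)])
qed

lemma boundaries_eq_zero:
  assumes "k < 0 \<or> k \<ge> int (card S0)"
  shows "d S0 ` chains k = {0}"
proof
  have "d S0 (\<lambda>B. 0) = 0"
    unfolding diffV_zero by (simp only: zero_fun_def)
  moreover have "(\<lambda>B. 0) \<in> chains k"
    using rel_chain_zero by blast
  ultimately show "{0} \<subseteq> d S0 ` chains k"
    by (metis empty_subsetI image_eqI insert_subset)
  show "d S0 ` chains k \<subseteq> {0}"
  proof (cases "k < 0")
    case True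
    then show ?thesis
      using chains_eq_zero[of k] \<open>d S0 (\<lambda>B. 0) = 0\<close> by (simp add: zero_fun_def)
  next
    case False
    then have zero: "chains (k + 1) = {0}"
      using assms chains_eq_zero[of "k + 1"] by simp
    show ?thesis
    proof
      fix y
      assume "y \<in> d S0 ` chains k"
      then obtain x where "rel_chain {} S0 k x" "y = d S0 x"
        by blast
      then have "y \<in> chains (k + 1)"
        using rel_chain_diffV[OF finite_ground] by simp
      then show "y \<in> {0}"
        using zero by simp
    qed
  qed
qed

lemma euler_characteristic:
  defines "r \<equiv> rel_rank {} S0"
  shows "int (C.dim {x \<in> chains (int r). d S0 x = 0}) - int (C.dim (d S0 ` chains (int r - 1)))
    = (-1) ^ r * (\<Sum>j<Suc (card S0). (-1) ^ j * int (C.dim (chains (int j))))"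
proof -
  define c where "c j = int (C.dim (chains (int j)))" for j
  define z where "z j = int (C.dim {x \<in> chains (int j). d S0 x = 0})" for j
  define b where "b j = int (C.dim (d S0 ` chains (int j - 1)))" for j
  define n where "n = card S0"
  have rank_nullity: "c j = z j + b (Suc j)" for j
    using dim_chains_eq_cycles_plus_boundaries[of "int j"] unfolding c_def z_def b_def by simp
  have exact: "z j = b j" if "j \<noteq> r" for j
    unfolding z_def b_def using cycles_eq_boundaries[of "int j"] that r_def by simp
  have "b 0 = 0" "b (Suc n) = 0"
    using boundaries_eq_zero[of "-1"] boundaries_eq_zero[of "int n"] by (simp_all add: b_def n_def)
  have "r \<le> n"
    using dim_le_card'[of "v ` S0"] card_image_le[of S0 v] finite_ground
    by (simp add: r_def rel_rank_def n_def)
  have "(\<Sum>j<Suc n. (-1) ^ j * c j)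
      = (\<Sum>j<Suc n. (-1) ^ j * (b j + b (Suc j)) + (if j = r then (-1) ^ r * (z r - b r) else 0))"
    using rank_nullity exact by (intro sum.cong refl) (auto simp: algebra_simps)
  also have "\<dots> = (\<Sum>j<Suc n. (-1) ^ j * (b j + b (Suc j))) + (-1) ^ r * (z r - b r)"
    using \<open>r \<le> n\<close> by (simp add: sum.distrib)
  also have "(\<Sum>j<Suc n. (-1) ^ j * (b j + b (Suc j))) = 0"
    using sum_alternating_telescope[of b "Suc n"] \<open>b 0 = 0\<close> \<open>b (Suc n) = 0\<close> by simp
  finally have "(-1) ^ r * (\<Sum>j<Suc n. (-1) ^ j * c j) = (-1) ^ r * ((-1) ^ r * (z r - b r))"
    by simp
  then show ?thesis
    unfolding c_def z_def b_def n_def by (simp flip: power_add mult.assoc add: power_mult[symmetric])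
qed

section \<open>The complex of a represented matroid\<close>

lemma chainV_eq_chains:
  assumes "\<And>B. B \<subseteq> S0 \<Longrightarrow> VB sc phi B = span (v ` B)" "\<And>B. 0 \<in> VB sc phi B"
  shows "chainV sc phi S0 j = chains (int (card S0) - j)"
proof (intro set_eqI iffI)
  fix x
  assume x: "x \<in> chainV sc phi S0 j"
  show "x \<in> chains (int (card S0) - j)"
  proof (simp, rule rel_chainI)
    fix B
    show "x B \<in> coeff {} B"
      using x assms(1) by (cases "x B = 0") (auto simp: chainV_def coeff_def span_zero)
    show "B \<subseteq> S0 \<and> int (card B) = int (card S0) - j" if "x B \<noteq> 0"
      using x that by (auto simp: chainV_def)
  qed
next
  fix x
  assume "x \<in> chains (int (card S0) - j)"
  then have x: "rel_chain {} S0 (int (card S0) - j) x"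
    by simp
  have "x B \<in> VB sc phi B" for B
    using assms rel_chainD(1,2)[OF x, of B] by (cases "x B = 0") (auto simp: coeff_def)
  moreover have "B \<noteq> {}" if "x B \<noteq> 0" for B
    using that rel_chainD(1)[OF x, of B] by (auto simp: coeff_def)
  ultimately show "x \<in> chainV sc phi S0 j"
    using rel_chainD(2,3)[OF x] by (auto simp: chainV_def)
qed

lemma homdim_eq:
  assumes "\<And>B. B \<subseteq> S0 \<Longrightarrow> VB sc phi B = span (v ` B)" "\<And>B. 0 \<in> VB sc phi B"
  shows "homdim sc phi om S0 i = (if i = int (card S0) - int (rel_rank {} S0)
    then (-1) ^ rel_rank {} S0 * (\<Sum>j<Suc (card S0). (-1) ^ j * int (C.dim (chains (int j))))
    else 0)"
proof -
  have "homdim sc phi om S0 i = int (C.dim {x \<in> chains (int (card S0) - i). d S0 x = 0})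
      - int (C.dim (d S0 ` chains (int (card S0) - i - 1)))"
    using chainV_eq_chains[OF assms] by (simp add: homdim_def diff_diff_add)
  then show ?thesis
    using cycles_eq_boundaries[of "int (card S0) - i"] euler_characteristic by auto
qed

lemma alternating_sum_rank_eq:
  "(\<Sum>J\<in>Pow S0. (-1) ^ card J * int (dim (v ` J)))
    = (\<Sum>j<Suc (card S0). (-1) ^ j * int (C.dim (chains (int j))))"
proof -
  have "(\<Sum>J\<in>Pow S0. (-1) ^ card J * int (dim (v ` J)))
      = (\<Sum>j<Suc (card S0). \<Sum>J | J \<subseteq> S0 \<and> card J = j. (-1) ^ card J * int (dim (v ` J)))"
    using finite_ground card_mono[OF finite_ground]
    by (subst sum.group[symmetric, of "Pow S0" "{..<Suc (card S0)}" card])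
      (auto simp: less_Suc_eq_le intro!: sum.cong)
  also have "\<dots> = (\<Sum>j<Suc (card S0). (-1) ^ j * int (C.dim (chains (int j))))"
    by (intro sum.cong refl) (simp add: dim_chains sum_distrib_left)
  finally show ?thesis .
qed

end

lemma vector_space_scU: "vector_space (scU :: 'k::field \<Rightarrow> ('a \<Rightarrow> 'k) \<Rightarrow> _)"
  unfolding vector_space_def scU_def by (auto simp: fun_eq_iff algebra_simps)

lemma span_eU_subset_U_S: "module.span scU (eU ` B) \<subseteq> U_S B"
proof -
  interpret U: vector_space "scU :: 'k::field \<Rightarrow> ('a \<Rightarrow> 'k) \<Rightarrow> _"
    by (rule vector_space_scU)
  have "U.subspace (U_S B)"
    unfolding U.subspace_def by (auto simp: U_S_def scU_def)
  moreover have "eU ` B \<subseteq> U_S B"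
    by (auto simp: U_S_def eU_def)
  ultimately show ?thesis
    by (intro U.span_minimal)
qed

lemma linear_restrict_U_S:
  fixes phi :: "('a \<Rightarrow> 'k::field) \<Rightarrow> 'w::ab_group_add"
  assumes "vector_space sc" "linear_on_US sc S phi"
  shows "Vector_Spaces.linear scU sc (\<lambda>u. phi (\<lambda>a. if a \<in> S then u a else 0))"
proof -
  let ?r = "\<lambda>u :: 'a \<Rightarrow> 'k. \<lambda>a. if a \<in> S then u a else 0"
  have in_U_S: "?r u \<in> U_S S" for u
    by (simp add: U_S_def)
  have add: "phi (u + w) = phi u + phi w" if "u \<in> U_S S" "w \<in> U_S S" for u w
    using assms(2) that unfolding linear_on_US_def by blast
  have scale: "phi (scU c u) = sc c (phi u)" if "u \<in> U_S S" for c u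
    using assms(2) that unfolding linear_on_US_def by blast
  have "?r (u + w) = ?r u + ?r w" for u w
    by (auto simp: fun_eq_iff)
  then have "phi (?r (u + w)) = phi (?r u) + phi (?r w)" for u w
    using add[OF in_U_S in_U_S] by simp
  moreover have "?r (scU c u) = scU c (?r u)" for c u
    by (auto simp: fun_eq_iff scU_def)
  then have "phi (?r (scU c u)) = sc c (phi (?r u))" for c u
    using scale[OF in_U_S] by simp
  ultimately show ?thesis
    unfolding Vector_Spaces.linear_iff using assms(1) vector_space_scU by blast
qed

lemma VB_eq_span:
  assumes "vector_space sc" "linear_on_US sc S phi" "B \<subseteq> S"
  shows "VB sc phi B = module.span sc ((\<lambda>a. phi (eU a)) ` B)"
proof -
  define psi where "psi = (\<lambda>u. phi (\<lambda>a. if a \<in> S then u a else 0))"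
  have "psi u = phi u" if "u \<in> module.span scU (eU ` B)" for u
  proof -
    have "u \<in> U_S B"
      using that span_eU_subset_U_S by blast
    then have "(\<lambda>a. if a \<in> S then u a else 0) = u"
      using assms(3) by (auto simp: U_S_def fun_eq_iff)
    then show ?thesis
      by (simp add: psi_def)
  qed
  then have "VB sc phi B = psi ` module.span scU (eU ` B)"
    unfolding VB_def by (intro image_cong refl) simp
  also have "\<dots> = module.span sc (psi ` eU ` B)"
  proof -
    have "module_hom scU sc psi"
      using linear_restrict_U_S[OF assms(1,2)] unfolding psi_def linear_iff_module_hom .
    then show ?thesis
      by (rule module_hom.span_image[symmetric])
  qed
  also have "psi ` eU ` B = (\<lambda>a. phi (eU a)) ` B"
  proof -
    have "psi (eU a) = phi (eU a)" if "a \<in> B" for a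
      using that assms(3) by (auto simp: psi_def eU_def fun_eq_iff intro!: arg_cong[where f = phi])
    then show ?thesis
      by (simp add: image_image)
  qed
  finally show ?thesis .
qed

lemma zero_in_VB:
  fixes phi :: "('a \<Rightarrow> 'k::field) \<Rightarrow> 'w::ab_group_add"
  assumes "linear_on_US sc S phi"
  shows "0 \<in> VB sc phi B"
proof -
  have "(0 :: 'a \<Rightarrow> 'k) \<in> U_S S"
    by (simp add: U_S_def)
  then have "phi (0 + 0) = phi 0 + phi 0"
    using assms unfolding linear_on_US_def by blast
  moreover have "0 \<in> module.span scU (eU ` B)"
    using module.span_zero[OF vector_space_scU[unfolded module_iff_vector_space[symmetric]]] .
  ultimately show ?thesis
    unfolding VB_def by force
qed

theorem theorem3p4:
  fixes sc :: "'k::field \<Rightarrow> 'w::ab_group_add \<Rightarrow> 'w"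
    and S :: "'a set"
    and phi :: "('a \<Rightarrow> 'k) \<Rightarrow> 'w"
    and om :: "'a rel"
    and i :: int
  assumes "vector_space sc"
    and "finite S"
    and "linear_on_US sc S phi"
    and "linear_order_on S om"
  shows "homdim sc phi om S i =
           (if i = int (card S) - int (mrank sc phi S) then beta_inv sc phi S else 0)"
proof -
  interpret ordered_configuration sc om S "\<lambda>a. phi (eU a)"
    by (intro ordered_configuration.intro ordered_configuration_axioms.intro
        chain_vector_space.intro assms)
  have VB: "VB sc phi B = span ((\<lambda>a. phi (eU a)) ` B)" if "B \<subseteq> S" for B
    using VB_eq_span[OF assms(1,3) that] .
  have mrank: "mrank sc phi J = dim ((\<lambda>a. phi (eU a)) ` J)" if "J \<subseteq> S" for J
    using VB[OF that] by (simp add: mrank_def)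
  have "rel_rank {} S = mrank sc phi S"
    by (simp add: rel_rank_def mrank)
  then show ?thesis
    using homdim_eq[OF VB zero_in_VB[OF assms(3)]] alternating_sum_rank_eq mrank
    by (simp add: beta_inv_def)
qed

end
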